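(* Let $X$ be a topological space and $x\in X$. The union of all finitely non-Hausdorff subsets of $X$ that contain $x$ (equivalently, of all maximal finitely non-Hausdorff subsets of $X$ that contain $x$) is a closed set in $X$.
   Context: A non-empty subset $A$ of $X$ is finitely non-Hausdorff if for every non-empty finite $F\subseteq A$ and every family $\{U_y:y\in F\}$ of open neighborhoods $U_y$ of $y$, $\bigcap_{y\in F}U_y\neq\emptyset$; it is maximal finitely non-Hausdorff if no finitely non-Hausdorff subset of $X$ properly contains it. *)

theory Defs
  imports "HOL-Analysis.Analysis"
begin

definition finitely_non_hausdorff :: "'a topology \<Rightarrow> 'a set \<Rightarrow> bool" where
  "finitely_non_hausdorff X A \<longleftrightarrow>
     A \<noteq> {} \<and> A \<subseteq> topspace X \<and>
     (\<forall>F U. finite F \<and> F \<noteq> {} \<and> F \<subseteq> A \<and>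
            (\<forall>y\<in>F. openin X (U y) \<and> y \<in> U y) \<longrightarrow> (\<Inter>y\<in>F. U y) \<noteq> {})"

definition maximal_finitely_non_hausdorff :: "'a topology \<Rightarrow> 'a set \<Rightarrow> bool" where
  "maximal_finitely_non_hausdorff X A \<longleftrightarrow>
     finitely_non_hausdorff X A \<and>
     \<not> (\<exists>B. finitely_non_hausdorff X B \<and> A \<subset> B)"

end

theory Submission
  imports Defs
begin

text \<open>A point \<open>z\<close> lies in some finitely non-Hausdorff set through \<open>x\<close> iff the pair
  \<open>{x, z}\<close> is finitely non-Hausdorff, i.e. iff \<open>z\<close> and \<open>x\<close> have no disjoint open
  neighbourhoods, i.e. iff \<open>z\<close> lies in the closure of every open neighbourhood of \<open>x\<close>.
  So the union in question is an intersection of closed sets. Being finitely non-Hausdorff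
  is a property of finite character, so by Zorn's lemma every such set lies in a maximal one.\<close>

lemma finitely_non_hausdorff_InterD:
  assumes "finitely_non_hausdorff X A" "finite F" "F \<noteq> {}" "F \<subseteq> A"
    and "\<And>y. y \<in> F \<Longrightarrow> openin X (U y) \<and> y \<in> U y"
  shows "(\<Inter>y\<in>F. U y) \<noteq> {}"
  using assms unfolding finitely_non_hausdorff_def by blast

lemma finitely_non_hausdorff_subset:
  assumes "finitely_non_hausdorff X A" "B \<subseteq> A" "B \<noteq> {}"
  shows "finitely_non_hausdorff X B"
  using assms unfolding finitely_non_hausdorff_def by (metis subset_trans)

lemma finitely_non_hausdorff_pair_iff:
  assumes "x \<in> topspace X" "z \<in> topspace X"
  shows "finitely_non_hausdorff X {x,z} \<longleftrightarrow>
    (\<forall>U V. openin X U \<and> x \<in> U \<and> openin X V \<and> z \<in> V \<longrightarrow> U \<inter> V \<noteq> {})"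
proof
  assume fnh: "finitely_non_hausdorff X {x,z}"
  show "\<forall>U V. openin X U \<and> x \<in> U \<and> openin X V \<and> z \<in> V \<longrightarrow> U \<inter> V \<noteq> {}"
  proof (intro allI impI)
    fix U V assume UV: "openin X U \<and> x \<in> U \<and> openin X V \<and> z \<in> V"
    show "U \<inter> V \<noteq> {}"
    proof (cases "x = z")
      case True
      then show ?thesis using UV by blast
    next
      case False
      let ?W = "\<lambda>y. if y = x then U else V"
      have "(\<Inter>y\<in>{x,z}. ?W y) \<noteq> {}"
        by (rule finitely_non_hausdorff_InterD[OF fnh]) (use UV False in auto)
      then show ?thesis using False by auto
    qed
  qed
next
  assume sep: "\<forall>U V. openin X U \<and> x \<in> U \<and> openin X V \<and> z \<in> V \<longrightarrow> U \<inter> V \<noteq> {}"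
  show "finitely_non_hausdorff X {x,z}"
    unfolding finitely_non_hausdorff_def
  proof (intro conjI allI impI)
    show "{x,z} \<noteq> {}" "{x,z} \<subseteq> topspace X" using assms by auto
    fix F U
    assume F: "finite F \<and> F \<noteq> {} \<and> F \<subseteq> {x, z} \<and> (\<forall>y\<in>F. openin X (U y) \<and> y \<in> U y)"
    then consider "F = {x}" | "F = {z}" | "F = {x,z}" by blast
    then show "(\<Inter>y\<in>F. U y) \<noteq> {}"
    proof cases
      case 3
      then have "U x \<inter> U z \<noteq> {}" using F sep by auto
      then show ?thesis using 3 by auto
    qed (use F in auto)
  qed
qed

lemma finitely_non_hausdorff_Union_chain:
  assumes "C \<noteq> {}" "subset.chain {A. finitely_non_hausdorff X A} C"
  shows "finitely_non_hausdorff X (\<Union>C)"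
proof -
  have fnh: "finitely_non_hausdorff X B" if "B \<in> C" for B
    using assms(2) that unfolding subset.chain_def by blast
  show ?thesis
    unfolding finitely_non_hausdorff_def
  proof (intro conjI allI impI)
    obtain B where "B \<in> C" using assms(1) by blast
    then show "\<Union>C \<noteq> {}"
      using fnh unfolding finitely_non_hausdorff_def by blast
    show "\<Union>C \<subseteq> topspace X"
      using fnh unfolding finitely_non_hausdorff_def by blast
    fix F U
    assume F: "finite F \<and> F \<noteq> {} \<and> F \<subseteq> \<Union>C \<and> (\<forall>y\<in>F. openin X (U y) \<and> y \<in> U y)"
    then obtain B where B: "B \<in> C" "F \<subseteq> B"
      using finite_subset_Union_chain[OF _ _ assms] by blast
    show "(\<Inter>y\<in>F. U y) \<noteq> {}"
      using finitely_non_hausdorff_InterD[OF fnh[OF B(1)] _ _ B(2)] F by blast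
  qed
qed

lemma finitely_non_hausdorff_extends_to_maximal:
  assumes "finitely_non_hausdorff X A"
  obtains M where "maximal_finitely_non_hausdorff X M" "A \<subseteq> M"
proof -
  let ?S = "{B. finitely_non_hausdorff X B \<and> A \<subseteq> B}"
  have "\<exists>M\<in>?S. \<forall>B\<in>?S. M \<subseteq> B \<longrightarrow> B = M"
  proof (rule subset_Zorn_nonempty)
    show "?S \<noteq> {}" using assms by blast
    fix C assume C: "C \<noteq> {}" "subset.chain ?S C"
    then have "subset.chain {B. finitely_non_hausdorff X B} C"
      unfolding subset.chain_def by blast
    then have "finitely_non_hausdorff X (\<Union>C)"
      using finitely_non_hausdorff_Union_chain C(1) by blast
    moreover have "A \<subseteq> \<Union>C"
      using C unfolding subset.chain_def by blast
    ultimately show "\<Union>C \<in> ?S" by blast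
  qed
  then obtain M where "M \<in> ?S" "\<forall>B\<in>?S. M \<subseteq> B \<longrightarrow> B = M" by blast
  then have "maximal_finitely_non_hausdorff X M" "A \<subseteq> M"
    unfolding maximal_finitely_non_hausdorff_def by blast+
  then show thesis by (rule that)
qed

lemma in_Inter_closure_of_neighbourhoods_iff:
  assumes "x \<in> topspace X"
  shows "z \<in> \<Inter>{X closure_of U | U. openin X U \<and> x \<in> U} \<longleftrightarrow>
    z \<in> topspace X \<and>
    (\<forall>U V. openin X U \<and> x \<in> U \<and> openin X V \<and> z \<in> V \<longrightarrow> U \<inter> V \<noteq> {})"
    (is "?lhs \<longleftrightarrow> ?rhs")
proof
  assume lhs: ?lhs
  have cl: "z \<in> X closure_of U" if "openin X U" "x \<in> U" for U
    using lhs that by blast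
  have "z \<in> topspace X"
    using cl[of "topspace X"] assms closure_of_subset_topspace by fastforce
  moreover have "U \<inter> V \<noteq> {}"
    if "openin X U" "x \<in> U" "openin X V" "z \<in> V" for U V
    using cl[OF that(1,2)] that(3,4) unfolding in_closure_of by blast
  ultimately show ?rhs by blast
next
  assume rhs: ?rhs
  have "z \<in> X closure_of U" if "openin X U" "x \<in> U" for U
    unfolding in_closure_of using rhs that by blast
  then show ?lhs by blast
qed

lemma Union_finitely_non_hausdorff_eq_Inter_closure_of:
  assumes "x \<in> topspace X"
  shows "\<Union>{A. finitely_non_hausdorff X A \<and> x \<in> A}
       = \<Inter>{X closure_of U | U. openin X U \<and> x \<in> U}"
proof (intro equalityI subsetI)
  fix z assume "z \<in> \<Union>{A. finitely_non_hausdorff X A \<and> x \<in> A}"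
  then obtain A where A: "finitely_non_hausdorff X A" "x \<in> A" "z \<in> A" by blast
  then have z: "z \<in> topspace X"
    unfolding finitely_non_hausdorff_def by blast
  have "finitely_non_hausdorff X {x,z}"
    by (rule finitely_non_hausdorff_subset[OF A(1)]) (use A in auto)
  then show "z \<in> \<Inter>{X closure_of U | U. openin X U \<and> x \<in> U}"
    unfolding in_Inter_closure_of_neighbourhoods_iff[OF assms]
      finitely_non_hausdorff_pair_iff[OF assms z]
    using z by blast
next
  fix z assume "z \<in> \<Inter>{X closure_of U | U. openin X U \<and> x \<in> U}"
  then have z: "z \<in> topspace X"
    and sep: "\<forall>U V. openin X U \<and> x \<in> U \<and> openin X V \<and> z \<in> V \<longrightarrow> U \<inter> V \<noteq> {}"
    unfolding in_Inter_closure_of_neighbourhoods_iff[OF assms] by blast+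
  have "finitely_non_hausdorff X {x,z}"
    using sep finitely_non_hausdorff_pair_iff[OF assms z] by blast
  then show "z \<in> \<Union>{A. finitely_non_hausdorff X A \<and> x \<in> A}" by blast
qed

lemma Union_finitely_non_hausdorff_eq_maximal:
  "\<Union>{A. finitely_non_hausdorff X A \<and> x \<in> A}
     = \<Union>{A. maximal_finitely_non_hausdorff X A \<and> x \<in> A}"
proof (intro equalityI subsetI)
  fix z assume "z \<in> \<Union>{A. finitely_non_hausdorff X A \<and> x \<in> A}"
  then obtain A where A: "finitely_non_hausdorff X A" "x \<in> A" "z \<in> A" by blast
  obtain M where "maximal_finitely_non_hausdorff X M" "A \<subseteq> M"
    using finitely_non_hausdorff_extends_to_maximal[OF A(1)] .
  then show "z \<in> \<Union>{A. maximal_finitely_non_hausdorff X A \<and> x \<in> A}" using A by blast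
qed (auto simp: maximal_finitely_non_hausdorff_def)

theorem corollary2p16:
  fixes X :: "'a topology" and x :: 'a
  assumes "x \<in> topspace X"
  shows "closedin X (\<Union>{A. finitely_non_hausdorff X A \<and> x \<in> A})
    \<and> \<Union>{A. finitely_non_hausdorff X A \<and> x \<in> A}
        = \<Union>{A. maximal_finitely_non_hausdorff X A \<and> x \<in> A}"
proof
  have "{X closure_of U | U. openin X U \<and> x \<in> U} \<noteq> {}" using assms by blast
  then have "closedin X (\<Inter>{X closure_of U | U. openin X U \<and> x \<in> U})"
    by (intro closedin_Inter) auto
  then show "closedin X (\<Union>{A. finitely_non_hausdorff X A \<and> x \<in> A})"
    using Union_finitely_non_hausdorff_eq_Inter_closure_of[OF assms] by simp
qed (rule Union_finitely_non_hausdorff_eq_maximal)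

end
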